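(* Fix an attacker label $A\in\mathcal{L}$. For all labels $pc$, all partial bijections $\beta$, all initial configurations $c_1,c_2$ and environments $\theta_1,\theta_2$ of $\lambda^{dFG}$ extended with flow-sensitive references such that $\vdash\mathbf{Valid}(c_1,\theta_1)$, $\vdash\mathbf{Valid}(c_2,\theta_2)$, $c_1\approx^{\beta}_A c_2$ and $\theta_1\approx^{\beta}_A\theta_2$: if $c_1\Downarrow^{\theta_1}_{pc}c_1'$ and $c_2\Downarrow^{\theta_2}_{pc}c_2'$, then there exists a partial bijection $\beta'\supseteq\beta$ such that $c_1'\approx^{\beta'}_A c_2'$.
   Context: Fix a lattice $(\mathcal{L},\sqsubseteq,\sqcup)$ of labels. The calculus has types $\tau::=\mathbf{unit}\mid\tau_1\to\tau_2\mid\tau_1+\tau_2\mid\tau_1\times\tau_2\mid\mathcal{L}\mid\mathbf{Ref}\,s\,\tau$ with $s\in\{I,S\}$ (standard simple typing; terms are implicitly well-typed and the tag $s$ determines which reference rules apply), expressions $e::=x\mid\lambda x.e\mid e_1\,e_2\mid()\mid\ell\mid(e_1,e_2)\mid\mathbf{fst}(e)\mid\mathbf{snd}(e)\mid\mathbf{inl}(e)\mid\mathbf{inr}(e)\mid\mathbf{case}(e,x.e_1,x.e_2)\mid\mathbf{getLabel}\mid\mathbf{labelOf}(e)\mid e_1\sqsubseteq^{?}e_2\mid\mathbf{taint}(e_1,e_2)\mid\mathbf{new}(e)\mid\,!e\mid e_1:=e_2\mid\mathbf{labelOfRef}(e)$, raw values $r::=()\mid(x.e,\theta)\mid\mathbf{inl}(v)\mid\mathbf{inr}(v)\mid(v_1,v_2)\mid\ell\mid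 n_\ell\mid n$ ($n\in\mathbb N$; $n_\ell$ is a flow-insensitive reference to memory $\ell$, $n$ a flow-sensitive heap address), values $v::=r^{\ell}$, environments $\theta$ finite maps from variables to values; $v\sqcup\ell'$ denotes $r^{\ell\sqcup\ell'}$ for $v=r^\ell$. Memories are finite lists of raw values, a store $\Sigma$ maps each label to a memory, a heap $\mu$ is a finite list of values; for a list $X$, $|X|$ is its length, $X[n]$ its $n$-th entry (from $0$), $X[n\mapsto y]$ the list with entry $n$ replaced (appended if $n=|X|$). Evaluation $\langle\Sigma,\mu,e\rangle\Downarrow^\theta_{pc}\langle\Sigma',\mu',v\rangle$ is the least relation closed under the rules below; "$e\Downarrow v$" means evaluation with current $\theta,pc$, store and heap threaded through premises left to right, rules without premises leave them unchanged. (Var) $x\Downarrow\theta(x)\sqcup pc$. (Unit) $()\Downarrow()^{pc}$. (Label) $\ell\Downarrow\ell^{pc}$. (Fun) $\lambda x.e\Downarrow(x.e,\theta)^{pc}$. (GetLabel) $\mathbf{getLabel}\Downarrow pc^{pc}$. (App) if $e_1\Downarrow(x.e,\theta')^{\ell}$, $e_2\Downarrow v_2$, and $e$ evaluates to $v$ in $\theta'[x\mapsto v_2]$ with program counter $pc\sqcup\ell$, then $e_1\,e_2\Downarrow v$. (Inl/Inr) $\mathbf{inl}(e)\Downarrow\mathbf{inl}(v)^{pc}$ if $e\Downarrow v$, similarly $\mathbf{inr}$. (Case) if $e\Downarrow\mathbf{inl}(v_1)^\ell$ and $e_1$ evaluates to $v$ in $\theta[x\mapsto v_1]$ at $pc\sqcup\ell$,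 then $\mathbf{case}(e,x.e_1,x.e_2)\Downarrow v$; symmetrically for $\mathbf{inr}$. (Pair) $(e_1,e_2)\Downarrow(v_1,v_2)^{pc}$. (Fst/Snd) if $e\Downarrow(v_1,v_2)^\ell$ then $\mathbf{fst}(e)\Downarrow v_1\sqcup\ell$, $\mathbf{snd}(e)\Downarrow v_2\sqcup\ell$. (LabelOf) if $e\Downarrow r^\ell$ then $\mathbf{labelOf}(e)\Downarrow\ell^\ell$. (Compare) if $e_1\Downarrow\ell_1^{\ell_1'}$, $e_2\Downarrow\ell_2^{\ell_2'}$ then $e_1\sqsubseteq^?e_2\Downarrow\mathbf{inl}(()^{pc})^{\ell_1'\sqcup\ell_2'}$ if $\ell_1\sqsubseteq\ell_2$, else $\mathbf{inr}(()^{pc})^{\ell_1'\sqcup\ell_2'}$. (Taint) if $e_1\Downarrow\ell^{\ell'}$, $\ell'\sqsubseteq\ell$, and $e_2$ evaluates to $v$ with program counter $\ell$, then $\mathbf{taint}(e_1,e_2)\Downarrow v$. Flow-insensitive references ($\mathbf{Ref}\,I$): (New) if $e\Downarrow r^\ell$ with store $\Sigma'$, $n=|\Sigma'(\ell)|$, then $\mathbf{new}(e)\Downarrow(n_\ell)^{pc}$ with store $\Sigma'[\ell\mapsto\Sigma'(\ell)[n\mapsto r]]$; (Read) if $e\Downarrow(n_\ell)^{\ell'}$ with store $\Sigma'$, $\Sigma'(\ell)[n]=r$, then $!e\Downarrow r^{\ell\sqcup\ell'}$; (Write) if $e_1\Downarrow(n_\ell)^{\ell_1}$, $\ell_1\sqsubseteq\ell$,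 $e_2\Downarrow r^{\ell_2}$ with store $\Sigma''$, $\ell_2\sqsubseteq\ell$, then $e_1:=e_2\Downarrow()^{pc}$ with store $\Sigma''[\ell\mapsto\Sigma''(\ell)[n\mapsto r]]$; (LabelOfRef) if $e\Downarrow(n_\ell)^{\ell'}$ then $\mathbf{labelOfRef}(e)\Downarrow\ell^{\ell\sqcup\ell'}$. Flow-sensitive references ($\mathbf{Ref}\,S$): (New-FS) if $e\Downarrow v$ with heap $\mu'$ and $n=|\mu'|$, then $\mathbf{new}(e)\Downarrow n^{pc}$ with heap $\mu'[n\mapsto v]$; (Read-FS) if $e\Downarrow n^{\ell}$ with heap $\mu'$ and $\mu'[n]=r^{\ell'}$, then $!e\Downarrow r^{\ell\sqcup\ell'}$; (LabelOfRef-FS) if $e\Downarrow n^{\ell_1}$ with heap $\mu'$ and $\mu'[n]=r^{\ell_2}$ then $\mathbf{labelOfRef}(e)\Downarrow\ell_2^{\ell_1\sqcup\ell_2}$; (Write-FS) if $e_1\Downarrow n^{\ell}$, $e_2\Downarrow r_2^{\ell_2}$ with heap $\mu''$, $\mu''[n]=r_1^{\ell_1}$ and $\ell\sqsubseteq\ell_1$, then $e_1:=e_2\Downarrow()^{pc}$ with heap $\mu''[n\mapsto r_2^{\ell_2\sqcup\ell}]$. Initial configurations are $\langle\Sigma,\mu,e\rangle$, final ones $\langle\Sigma,\mu,v\rangle$, and $c\Downarrow^\theta_{pc}c'$ is the evaluation relation. A partial bijection $\beta$ is a finite injective partial function $\mathbb N\rightharpoonup\mathbb N$; $\beta\subseteq\beta'$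 means every pair of $\beta$ is in $\beta'$. $A$-equivalence up to $\beta$ ($\approx^\beta_A$), mutually on values and raw values: $r_1^\ell\approx^\beta_A r_2^\ell$ if $\ell\sqsubseteq A$ and $r_1\approx^\beta_A r_2$; $r_1^{\ell_1}\approx^\beta_A r_2^{\ell_2}$ if $\ell_1,\ell_2\not\sqsubseteq A$; $()\approx()$, $\ell\approx\ell$; closures $(x.e_1,\theta_1)\approx^\beta_A(x.e_2,\theta_2)$ if $e_1,e_2$ $\alpha$-equivalent and $\theta_1\approx^\beta_A\theta_2$ (same domain, pointwise); injections and pairs homomorphically; $n_\ell\approx^\beta_A n_\ell$ if $\ell\sqsubseteq A$; $(n_1)_{\ell_1}\approx^\beta_A(n_2)_{\ell_2}$ if $\ell_1,\ell_2\not\sqsubseteq A$; $n_1\approx^\beta_A n_2$ (heap addresses) iff $\beta(n_1)=n_2$. Memories at label $\ell$: always related if $\ell\not\sqsubseteq A$, otherwise same length and pointwise related; stores pointwise. Heaps: $\mu_1\approx^\beta_A\mu_2$ iff $\mathrm{dom}(\beta)\subseteq\{0,\dots,|\mu_1|-1\}$, $\mathrm{rng}(\beta)\subseteq\{0,\dots,|\mu_2|-1\}$ and $\mu_1[n_1]\approx^\beta_A\mu_2[n_2]$ whenever $\beta(n_1)=n_2$. Initial configurations $\langle\Sigma_1,\mu_1,e_1\rangle\approx^\beta_A\langle\Sigma_2,\mu_2,e_2\rangle$ iff $\Sigma_1\approx^\beta_A\Sigma_2$, $\mu_1\approx^\beta_A\mu_2$ and $e_1,e_2$ $\alpha$-equivalent;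 final configurations $\langle\Sigma_1,\mu_1,v_1\rangle\approx^\beta_A\langle\Sigma_2,\mu_2,v_2\rangle$ iff the stores, heaps and values are related up to $\beta$. Validity: $n\vdash\mathbf{Valid}(x)$ for a value, raw value, environment, memory, store or heap $x$ means every flow-sensitive heap address $n'$ occurring in $x$ (including inside closure environments and nested values) satisfies $n'<n$ (flow-insensitive references $n'_\ell$ are always valid). $\vdash\mathbf{Valid}(\langle\Sigma,\mu,e\rangle,\theta)$ iff, for $n=|\mu|$, $n\vdash\mathbf{Valid}(\Sigma)$, $n\vdash\mathbf{Valid}(\mu)$ and $n\vdash\mathbf{Valid}(\theta)$. *)

theory Defs
  imports Main
begin

(* Labels: an arbitrary join-semilattice ('l::semilattice_sup), with \<le> as \<sqsubseteq> and sup as \<squnion>. *)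

datatype tag = I | S

(* Expressions; variables are de Bruijn indices (so alpha-equivalence is syntactic equality).
   Reference operations carry the tag s of their (implicit) type Ref s tau. *)
datatype 'l expr =
    Var nat
  | Lam "'l expr"
  | App "'l expr" "'l expr"
  | Unit
  | Lbl 'l
  | Pair "'l expr" "'l expr"
  | Fst "'l expr"
  | Snd "'l expr"
  | Inl "'l expr"
  | Inr "'l expr"
  | Case "'l expr" "'l expr" "'l expr"   (* binds index 0 in both branches *)
  | GetLabel
  | LabelOf "'l expr"
  | Cmp "'l expr" "'l expr"
  | Taint "'l expr" "'l expr"
  | New tag "'l expr"
  | Read tag "'l expr"
  | Write tag "'l expr" "'l expr"
  | LabelOfRef tag "'l expr"

datatype 'l raw =
    RUnit
  | Clos "'l expr" "'l vl list"   (* closure (x.e, theta); env is a list indexed by de Bruijn index *)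
  | RInl "'l vl"
  | RInr "'l vl"
  | RPair "'l vl" "'l vl"
  | RLbl 'l
  | RRefI 'l nat       (* n_l : flow-insensitive reference into memory l *)
  | RRefS nat          (* n : flow-sensitive heap address *)
and 'l vl = Val "'l raw" 'l

type_synonym 'l env = "'l vl list"
type_synonym 'l memory = "'l raw list"
type_synonym 'l store = "'l \<Rightarrow> 'l memory"
type_synonym 'l heap = "'l vl list"
type_synonym 'l iconf = "'l store \<times> 'l heap \<times> 'l expr"
type_synonym 'l fconf = "'l store \<times> 'l heap \<times> 'l vl"

fun vjoin :: "'l::semilattice_sup vl \<Rightarrow> 'l \<Rightarrow> 'l vl" where
  "vjoin (Val r l) l' = Val r (sup l l')"

definition lupd :: "'a list \<Rightarrow> nat \<Rightarrow> 'a \<Rightarrow> 'a list" where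
  "lupd X n y = (if n = length X then X @ [y] else X[n := y])"

inductive eval :: "'l::semilattice_sup env \<Rightarrow> 'l \<Rightarrow> 'l iconf \<Rightarrow> 'l fconf \<Rightarrow> bool" where
  EVar: "i < length \<theta> \<Longrightarrow> eval \<theta> pc (\<Sigma>, \<mu>, Var i) (\<Sigma>, \<mu>, vjoin (\<theta> ! i) pc)"
| EUnit: "eval \<theta> pc (\<Sigma>, \<mu>, Unit) (\<Sigma>, \<mu>, Val RUnit pc)"
| ELabel: "eval \<theta> pc (\<Sigma>, \<mu>, Lbl l) (\<Sigma>, \<mu>, Val (RLbl l) pc)"
| EFun: "eval \<theta> pc (\<Sigma>, \<mu>, Lam e) (\<Sigma>, \<mu>, Val (Clos e \<theta>) pc)"
| EGetLabel: "eval \<theta> pc (\<Sigma>, \<mu>, GetLabel) (\<Sigma>, \<mu>, Val (RLbl pc) pc)"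
| EApp: "\<lbrakk> eval \<theta> pc (\<Sigma>, \<mu>, e1) (\<Sigma>1, \<mu>1, Val (Clos e \<theta>') l);
          eval \<theta> pc (\<Sigma>1, \<mu>1, e2) (\<Sigma>2, \<mu>2, v2);
          eval (v2 # \<theta>') (sup pc l) (\<Sigma>2, \<mu>2, e) c' \<rbrakk>
         \<Longrightarrow> eval \<theta> pc (\<Sigma>, \<mu>, App e1 e2) c'"
| EInl: "eval \<theta> pc (\<Sigma>, \<mu>, e) (\<Sigma>', \<mu>', v) \<Longrightarrow> eval \<theta> pc (\<Sigma>, \<mu>, Inl e) (\<Sigma>', \<mu>', Val (RInl v) pc)"
| EInr: "eval \<theta> pc (\<Sigma>, \<mu>, e) (\<Sigma>', \<mu>', v) \<Longrightarrow> eval \<theta> pc (\<Sigma>, \<mu>, Inr e) (\<Sigma>', \<mu>', Val (RInr v) pc)"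
| ECaseL: "\<lbrakk> eval \<theta> pc (\<Sigma>, \<mu>, e) (\<Sigma>1, \<mu>1, Val (RInl v1) l);
           eval (v1 # \<theta>) (sup pc l) (\<Sigma>1, \<mu>1, e1) c' \<rbrakk>
          \<Longrightarrow> eval \<theta> pc (\<Sigma>, \<mu>, Case e e1 e2) c'"
| ECaseR: "\<lbrakk> eval \<theta> pc (\<Sigma>, \<mu>, e) (\<Sigma>1, \<mu>1, Val (RInr v1) l);
           eval (v1 # \<theta>) (sup pc l) (\<Sigma>1, \<mu>1, e2) c' \<rbrakk>
          \<Longrightarrow> eval \<theta> pc (\<Sigma>, \<mu>, Case e e1 e2) c'"
| EPair: "\<lbrakk> eval \<theta> pc (\<Sigma>, \<mu>, e1) (\<Sigma>1, \<mu>1, v1); eval \<theta> pc (\<Sigma>1, \<mu>1, e2) (\<Sigma>2, \<mu>2, v2) \<rbrakk>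
          \<Longrightarrow> eval \<theta> pc (\<Sigma>, \<mu>, Pair e1 e2) (\<Sigma>2, \<mu>2, Val (RPair v1 v2) pc)"
| EFst: "eval \<theta> pc (\<Sigma>, \<mu>, e) (\<Sigma>', \<mu>', Val (RPair v1 v2) l)
          \<Longrightarrow> eval \<theta> pc (\<Sigma>, \<mu>, Fst e) (\<Sigma>', \<mu>', vjoin v1 l)"
| ESnd: "eval \<theta> pc (\<Sigma>, \<mu>, e) (\<Sigma>', \<mu>', Val (RPair v1 v2) l)
          \<Longrightarrow> eval \<theta> pc (\<Sigma>, \<mu>, Snd e) (\<Sigma>', \<mu>', vjoin v2 l)"
| ELabelOf: "eval \<theta> pc (\<Sigma>, \<mu>, e) (\<Sigma>', \<mu>', Val r l)
          \<Longrightarrow> eval \<theta> pc (\<Sigma>, \<mu>, LabelOf e) (\<Sigma>', \<mu>', Val (RLbl l) l)"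
| ECmpT: "\<lbrakk> eval \<theta> pc (\<Sigma>, \<mu>, e1) (\<Sigma>1, \<mu>1, Val (RLbl l1) l1');
           eval \<theta> pc (\<Sigma>1, \<mu>1, e2) (\<Sigma>2, \<mu>2, Val (RLbl l2) l2'); l1 \<le> l2 \<rbrakk>
          \<Longrightarrow> eval \<theta> pc (\<Sigma>, \<mu>, Cmp e1 e2) (\<Sigma>2, \<mu>2, Val (RInl (Val RUnit pc)) (sup l1' l2'))"
| ECmpF: "\<lbrakk> eval \<theta> pc (\<Sigma>, \<mu>, e1) (\<Sigma>1, \<mu>1, Val (RLbl l1) l1');
           eval \<theta> pc (\<Sigma>1, \<mu>1, e2) (\<Sigma>2, \<mu>2, Val (RLbl l2) l2'); \<not> l1 \<le> l2 \<rbrakk>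
          \<Longrightarrow> eval \<theta> pc (\<Sigma>, \<mu>, Cmp e1 e2) (\<Sigma>2, \<mu>2, Val (RInr (Val RUnit pc)) (sup l1' l2'))"
| ETaint: "\<lbrakk> eval \<theta> pc (\<Sigma>, \<mu>, e1) (\<Sigma>1, \<mu>1, Val (RLbl l) l'); l' \<le> l;
           eval \<theta> l (\<Sigma>1, \<mu>1, e2) c' \<rbrakk>
          \<Longrightarrow> eval \<theta> pc (\<Sigma>, \<mu>, Taint e1 e2) c'"
| ENew: "\<lbrakk> eval \<theta> pc (\<Sigma>, \<mu>, e) (\<Sigma>', \<mu>', Val r l); n = length (\<Sigma>' l) \<rbrakk>
          \<Longrightarrow> eval \<theta> pc (\<Sigma>, \<mu>, New I e) (\<Sigma>'(l := lupd (\<Sigma>' l) n r), \<mu>', Val (RRefI l n) pc)"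
| ERead: "\<lbrakk> eval \<theta> pc (\<Sigma>, \<mu>, e) (\<Sigma>', \<mu>', Val (RRefI l n) l'); n < length (\<Sigma>' l); \<Sigma>' l ! n = r \<rbrakk>
          \<Longrightarrow> eval \<theta> pc (\<Sigma>, \<mu>, Read I e) (\<Sigma>', \<mu>', Val r (sup l l'))"
| EWrite: "\<lbrakk> eval \<theta> pc (\<Sigma>, \<mu>, e1) (\<Sigma>1, \<mu>1, Val (RRefI l n) l1); l1 \<le> l;
            eval \<theta> pc (\<Sigma>1, \<mu>1, e2) (\<Sigma>2, \<mu>2, Val r l2); l2 \<le> l; n \<le> length (\<Sigma>2 l) \<rbrakk>
          \<Longrightarrow> eval \<theta> pc (\<Sigma>, \<mu>, Write I e1 e2) (\<Sigma>2(l := lupd (\<Sigma>2 l) n r), \<mu>2, Val RUnit pc)"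
| ELabelOfRef: "eval \<theta> pc (\<Sigma>, \<mu>, e) (\<Sigma>', \<mu>', Val (RRefI l n) l')
          \<Longrightarrow> eval \<theta> pc (\<Sigma>, \<mu>, LabelOfRef I e) (\<Sigma>', \<mu>', Val (RLbl l) (sup l l'))"
| ENewFS: "\<lbrakk> eval \<theta> pc (\<Sigma>, \<mu>, e) (\<Sigma>', \<mu>', v); n = length \<mu>' \<rbrakk>
          \<Longrightarrow> eval \<theta> pc (\<Sigma>, \<mu>, New S e) (\<Sigma>', lupd \<mu>' n v, Val (RRefS n) pc)"
| EReadFS: "\<lbrakk> eval \<theta> pc (\<Sigma>, \<mu>, e) (\<Sigma>', \<mu>', Val (RRefS n) l); n < length \<mu>'; \<mu>' ! n = Val r l' \<rbrakk>
          \<Longrightarrow> eval \<theta> pc (\<Sigma>, \<mu>, Read S e) (\<Sigma>', \<mu>', Val r (sup l l'))"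
| ELabelOfRefFS: "\<lbrakk> eval \<theta> pc (\<Sigma>, \<mu>, e) (\<Sigma>', \<mu>', Val (RRefS n) l1); n < length \<mu>'; \<mu>' ! n = Val r l2 \<rbrakk>
          \<Longrightarrow> eval \<theta> pc (\<Sigma>, \<mu>, LabelOfRef S e) (\<Sigma>', \<mu>', Val (RLbl l2) (sup l1 l2))"
| EWriteFS: "\<lbrakk> eval \<theta> pc (\<Sigma>, \<mu>, e1) (\<Sigma>1, \<mu>1, Val (RRefS n) l);
            eval \<theta> pc (\<Sigma>1, \<mu>1, e2) (\<Sigma>2, \<mu>2, Val r2 l2);
            n < length \<mu>2; \<mu>2 ! n = Val r1 l1; l \<le> l1 \<rbrakk>
          \<Longrightarrow> eval \<theta> pc (\<Sigma>, \<mu>, Write S e1 e2) (\<Sigma>2, lupd \<mu>2 n (Val r2 (sup l2 l)), Val RUnit pc)"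

definition pbij :: "(nat \<rightharpoonup> nat) \<Rightarrow> bool" where
  "pbij \<beta> \<longleftrightarrow> finite (dom \<beta>) \<and> inj_on \<beta> (dom \<beta>)"

fun veq :: "'l::semilattice_sup \<Rightarrow> (nat \<rightharpoonup> nat) \<Rightarrow> 'l vl \<Rightarrow> 'l vl \<Rightarrow> bool"
and req :: "'l::semilattice_sup \<Rightarrow> (nat \<rightharpoonup> nat) \<Rightarrow> 'l raw \<Rightarrow> 'l raw \<Rightarrow> bool" where
  "veq A \<beta> (Val r1 l1) (Val r2 l2) \<longleftrightarrow>
     (l1 = l2 \<and> l1 \<le> A \<and> req A \<beta> r1 r2) \<or> (\<not> l1 \<le> A \<and> \<not> l2 \<le> A)"
| "req A \<beta> RUnit RUnit \<longleftrightarrow> True"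
| "req A \<beta> (Clos e1 \<theta>1) (Clos e2 \<theta>2) \<longleftrightarrow> e1 = e2 \<and> list_all2 (veq A \<beta>) \<theta>1 \<theta>2"
| "req A \<beta> (RInl v1) (RInl v2) \<longleftrightarrow> veq A \<beta> v1 v2"
| "req A \<beta> (RInr v1) (RInr v2) \<longleftrightarrow> veq A \<beta> v1 v2"
| "req A \<beta> (RPair v1 w1) (RPair v2 w2) \<longleftrightarrow> veq A \<beta> v1 v2 \<and> veq A \<beta> w1 w2"
| "req A \<beta> (RLbl l1) (RLbl l2) \<longleftrightarrow> l1 = l2"
| "req A \<beta> (RRefI l1 n1) (RRefI l2 n2) \<longleftrightarrow>
     (l1 = l2 \<and> l1 \<le> A \<and> n1 = n2) \<or> (\<not> l1 \<le> A \<and> \<not> l2 \<le> A)"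
| "req A \<beta> (RRefS n1) (RRefS n2) \<longleftrightarrow> \<beta> n1 = Some n2"
| "req A \<beta> _ _ \<longleftrightarrow> False"

definition env_eq :: "'l::semilattice_sup \<Rightarrow> (nat \<rightharpoonup> nat) \<Rightarrow> 'l env \<Rightarrow> 'l env \<Rightarrow> bool" where
  "env_eq A \<beta> \<theta>1 \<theta>2 \<longleftrightarrow> list_all2 (veq A \<beta>) \<theta>1 \<theta>2"

definition mem_eq :: "'l::semilattice_sup \<Rightarrow> (nat \<rightharpoonup> nat) \<Rightarrow> 'l \<Rightarrow> 'l memory \<Rightarrow> 'l memory \<Rightarrow> bool" where
  "mem_eq A \<beta> l m1 m2 \<longleftrightarrow> (\<not> l \<le> A) \<or> list_all2 (req A \<beta>) m1 m2"

definition store_eq :: "'l::semilattice_sup \<Rightarrow> (nat \<rightharpoonup> nat) \<Rightarrow> 'l store \<Rightarrow> 'l store \<Rightarrow> bool" where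
  "store_eq A \<beta> \<Sigma>1 \<Sigma>2 \<longleftrightarrow> (\<forall>l. mem_eq A \<beta> l (\<Sigma>1 l) (\<Sigma>2 l))"

definition heap_eq :: "'l::semilattice_sup \<Rightarrow> (nat \<rightharpoonup> nat) \<Rightarrow> 'l heap \<Rightarrow> 'l heap \<Rightarrow> bool" where
  "heap_eq A \<beta> \<mu>1 \<mu>2 \<longleftrightarrow>
     dom \<beta> \<subseteq> {..<length \<mu>1} \<and> ran \<beta> \<subseteq> {..<length \<mu>2} \<and>
     (\<forall>n1 n2. \<beta> n1 = Some n2 \<longrightarrow> veq A \<beta> (\<mu>1 ! n1) (\<mu>2 ! n2))"

fun iconf_eq :: "'l::semilattice_sup \<Rightarrow> (nat \<rightharpoonup> nat) \<Rightarrow> 'l iconf \<Rightarrow> 'l iconf \<Rightarrow> bool" where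
  "iconf_eq A \<beta> (\<Sigma>1, \<mu>1, e1) (\<Sigma>2, \<mu>2, e2) \<longleftrightarrow>
     store_eq A \<beta> \<Sigma>1 \<Sigma>2 \<and> heap_eq A \<beta> \<mu>1 \<mu>2 \<and> e1 = e2"

fun fconf_eq :: "'l::semilattice_sup \<Rightarrow> (nat \<rightharpoonup> nat) \<Rightarrow> 'l fconf \<Rightarrow> 'l fconf \<Rightarrow> bool" where
  "fconf_eq A \<beta> (\<Sigma>1, \<mu>1, v1) (\<Sigma>2, \<mu>2, v2) \<longleftrightarrow>
     store_eq A \<beta> \<Sigma>1 \<Sigma>2 \<and> heap_eq A \<beta> \<mu>1 \<mu>2 \<and> veq A \<beta> v1 v2"

fun vvalid :: "nat \<Rightarrow> 'l vl \<Rightarrow> bool"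
and rvalid :: "nat \<Rightarrow> 'l raw \<Rightarrow> bool" where
  "vvalid n (Val r l) \<longleftrightarrow> rvalid n r"
| "rvalid n RUnit \<longleftrightarrow> True"
| "rvalid n (Clos e \<theta>) \<longleftrightarrow> (\<forall>v\<in>set \<theta>. vvalid n v)"
| "rvalid n (RInl v) \<longleftrightarrow> vvalid n v"
| "rvalid n (RInr v) \<longleftrightarrow> vvalid n v"
| "rvalid n (RPair v w) \<longleftrightarrow> vvalid n v \<and> vvalid n w"
| "rvalid n (RLbl l) \<longleftrightarrow> True"
| "rvalid n (RRefI l m) \<longleftrightarrow> True"
| "rvalid n (RRefS m) \<longleftrightarrow> m < n"

fun valid_init :: "'l iconf \<Rightarrow> 'l env \<Rightarrow> bool" where
  "valid_init (\<Sigma>, \<mu>, e) \<theta> \<longleftrightarrow>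
     (let n = length \<mu> in
        (\<forall>l. \<forall>r\<in>set (\<Sigma> l). rvalid n r) \<and> (\<forall>v\<in>set \<mu>. vvalid n v) \<and> (\<forall>v\<in>set \<theta>. vvalid n v))"

end

theory Submission
  imports Defs
begin

(* Induct on the first run and invert the second one at each step. The partial bijection only
   grows, and only when both runs allocate a flow-sensitive cell: the two fresh addresses are
   paired. When the runs branch on data (applying a closure, case analysis, taint), either the
   data are low, so both runs continue with the same code under the same program counter, or
   they are high, so both continue under a high program counter. A run under a high program
   counter is confined: it leaves the low memories unchanged, overwrites only heap cells with
   high contents by high contents, and returns a high value. Two confined runs from related
   configurations therefore end in related configurations, without extending the bijection. *)

section \<open>Low equivalence and the partial bijection\<close>

fun vlabel :: "'l vl \<Rightarrow> 'l" where
  "vlabel (Val r l) = l"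

lemma vlabel_vjoin [simp]: "vlabel (vjoin v l) = sup (vlabel v) l"
  by (cases v) auto

lemma veq_vlabel_low_iff: "veq A \<beta> v w \<Longrightarrow> vlabel v \<le> A \<longleftrightarrow> vlabel w \<le> A"
  by (cases v; cases w) auto

lemma veq_high: "\<not> vlabel v \<le> A \<Longrightarrow> \<not> vlabel w \<le> A \<Longrightarrow> veq A \<beta> v w"
  by (cases v; cases w) auto

lemma veq_vjoin: "veq A \<beta> v w \<Longrightarrow> veq A \<beta> (vjoin v l) (vjoin w l)"
  by (cases v; cases w) (auto simp: le_sup_iff)

lemma map_le_SomeD: "\<beta> \<subseteq>\<^sub>m \<beta>' \<Longrightarrow> \<beta> n = Some k \<Longrightarrow> \<beta>' n = Some k"
  by (metis domI map_le_def)

lemma veq_vjoin_component: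
  assumes "veq A \<beta> (Val r l) (Val r' l')" and "l \<le> A \<Longrightarrow> veq A \<beta> v w"
  shows "veq A \<beta> (vjoin v l) (vjoin w l')"
proof (cases "l \<le> A")
  case True
  with assms show ?thesis by (auto intro: veq_vjoin)
next
  case False
  with assms(1) show ?thesis by (auto intro: veq_high simp: le_sup_iff)
qed

lemma veq_req_mono:
  assumes "\<beta> \<subseteq>\<^sub>m \<beta>'"
  shows "veq A \<beta> v w \<Longrightarrow> veq A \<beta>' v w" and "req A \<beta> r s \<Longrightarrow> req A \<beta>' r s"
proof (induction v and r arbitrary: w and s)
  case (Val r l)
  then show ?case by (cases w) auto
next
  case (Clos e \<theta>)
  then show ?case by (cases s) (auto simp: list_all2_conv_all_nth)
next
  case (RRefS n)
  then show ?case using assms by (cases s) (auto intro: map_le_SomeD)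
qed (case_tac s; auto)+

lemmas veq_mono = veq_req_mono(1)[rotated]

lemma env_eq_mono: "env_eq A \<beta> \<theta>1 \<theta>2 \<Longrightarrow> \<beta> \<subseteq>\<^sub>m \<beta>' \<Longrightarrow> env_eq A \<beta>' \<theta>1 \<theta>2"
  unfolding env_eq_def by (erule list_all2_mono) (erule veq_mono)

lemma store_eq_mono: "store_eq A \<beta> \<Sigma>1 \<Sigma>2 \<Longrightarrow> \<beta> \<subseteq>\<^sub>m \<beta>' \<Longrightarrow> store_eq A \<beta>' \<Sigma>1 \<Sigma>2"
  unfolding store_eq_def mem_eq_def by (metis list_all2_mono veq_req_mono(2))

lemma list_all2_lupd:
  assumes "list_all2 P xs ys" "P x y"
  shows "list_all2 P (lupd xs n x) (lupd ys n y)"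
  using assms list_all2_lengthD[OF assms(1)] unfolding lupd_def
  by (simp add: list_all2_update_cong list_all2_appendI)

lemma store_eq_lupd:
  assumes "store_eq A \<beta> \<Sigma>1 \<Sigma>2" and "l1 \<le> A \<longleftrightarrow> l2 \<le> A"
    and "l1 \<le> A \<Longrightarrow> l2 = l1 \<and> n2 = n1 \<and> req A \<beta> r1 r2"
  shows "store_eq A \<beta> (\<Sigma>1(l1 := lupd (\<Sigma>1 l1) n1 r1)) (\<Sigma>2(l2 := lupd (\<Sigma>2 l2) n2 r2))"
  unfolding store_eq_def mem_eq_def
proof
  fix l
  show "\<not> l \<le> A \<or> list_all2 (req A \<beta>)
      ((\<Sigma>1(l1 := lupd (\<Sigma>1 l1) n1 r1)) l) ((\<Sigma>2(l2 := lupd (\<Sigma>2 l2) n2 r2)) l)"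
  proof (cases "l \<le> A \<and> (l = l1 \<or> l = l2)")
    case True
    with assms(2,3) have "l = l1" "l2 = l1" "n2 = n1" "req A \<beta> r1 r2" by auto
    with assms(1) show ?thesis unfolding store_eq_def mem_eq_def by (auto intro: list_all2_lupd)
  next
    case False
    with assms(1) show ?thesis unfolding store_eq_def mem_eq_def by auto
  qed
qed

lemma heap_eq_SomeD:
  assumes "heap_eq A \<beta> \<mu>1 \<mu>2" "\<beta> n1 = Some n2"
  shows "n1 < length \<mu>1" "n2 < length \<mu>2" "veq A \<beta> (\<mu>1 ! n1) (\<mu>2 ! n2)"
  using assms unfolding heap_eq_def by (blast intro: domI ranI)+

lemma heap_eq_alloc:
  assumes "pbij \<beta>" "heap_eq A \<beta> \<mu>1 \<mu>2" "veq A \<beta> v1 v2"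
  defines "\<beta>' \<equiv> \<beta>(length \<mu>1 \<mapsto> length \<mu>2)"
  shows "pbij \<beta>'" and "\<beta> \<subseteq>\<^sub>m \<beta>'" and "heap_eq A \<beta>' (\<mu>1 @ [v1]) (\<mu>2 @ [v2])"
proof -
  have fresh1: "length \<mu>1 \<notin> dom \<beta>" and fresh2: "length \<mu>2 \<notin> ran \<beta>"
    using assms(2) unfolding heap_eq_def by auto
  show "pbij \<beta>'"
    using assms(1) fresh1 fresh2 unfolding pbij_def \<beta>'_def inj_on_def by (auto simp: ran_def)
  show ext: "\<beta> \<subseteq>\<^sub>m \<beta>'"
    using fresh1 unfolding \<beta>'_def map_le_def by auto
  have "veq A \<beta>' ((\<mu>1 @ [v1]) ! n1) ((\<mu>2 @ [v2]) ! n2)" if "\<beta>' n1 = Some n2" for n1 n2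
  proof (cases "n1 = length \<mu>1")
    case True
    with that have "n2 = length \<mu>2" unfolding \<beta>'_def by simp
    with True veq_mono[OF assms(3) ext] show ?thesis by simp
  next
    case False
    then have "\<beta> n1 = Some n2" using that unfolding \<beta>'_def by simp
    with assms(2) have "n1 < length \<mu>1" "n2 < length \<mu>2" "veq A \<beta> (\<mu>1 ! n1) (\<mu>2 ! n2)"
      by (rule heap_eq_SomeD)+
    then show ?thesis using veq_mono[OF _ ext] by (simp add: nth_append)
  qed
  moreover have "ran \<beta>' \<subseteq> insert (length \<mu>2) (ran \<beta>)"
    unfolding \<beta>'_def by (auto simp: ran_def)
  ultimately show "heap_eq A \<beta>' (\<mu>1 @ [v1]) (\<mu>2 @ [v2])"
    using assms(2) unfolding heap_eq_def \<beta>'_def by auto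
qed

lemma heap_eq_update:
  assumes "pbij \<beta>" "heap_eq A \<beta> \<mu>1 \<mu>2" "\<beta> n1 = Some n2" "veq A \<beta> v1 v2"
  shows "heap_eq A \<beta> (\<mu>1[n1 := v1]) (\<mu>2[n2 := v2])"
proof -
  have "veq A \<beta> (\<mu>1[n1 := v1] ! a) (\<mu>2[n2 := v2] ! b)" if "\<beta> a = Some b" for a b
  proof (cases "a = n1")
    case True
    with assms that heap_eq_SomeD[OF assms(2,3)] show ?thesis by simp
  next
    case False
    then have "b \<noteq> n2"
      using assms(1,3) that unfolding pbij_def inj_on_def by (metis domI)
    with False assms(2) that show ?thesis unfolding heap_eq_def by simp
  qed
  with assms(2) show ?thesis unfolding heap_eq_def by simp
qed

section \<open>Confinement under a high program counter\<close>

definition store_low_stable :: "'l::semilattice_sup \<Rightarrow> 'l store \<Rightarrow> 'l store \<Rightarrow> bool" where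
  "store_low_stable A \<Sigma> \<Sigma>' \<longleftrightarrow> (\<forall>l. l \<le> A \<longrightarrow> \<Sigma>' l = \<Sigma> l)"

definition heap_low_stable :: "'l::semilattice_sup \<Rightarrow> 'l heap \<Rightarrow> 'l heap \<Rightarrow> bool" where
  "heap_low_stable A \<mu> \<mu>' \<longleftrightarrow> length \<mu> \<le> length \<mu>' \<and>
     (\<forall>n<length \<mu>. \<mu>' ! n = \<mu> ! n \<or> \<not> vlabel (\<mu> ! n) \<le> A \<and> \<not> vlabel (\<mu>' ! n) \<le> A)"

lemma store_low_stable_refl: "store_low_stable A \<Sigma> \<Sigma>"
  by (simp add: store_low_stable_def)

lemma store_low_stable_trans:
  "store_low_stable A \<Sigma>1 \<Sigma>2 \<Longrightarrow> store_low_stable A \<Sigma>2 \<Sigma>3 \<Longrightarrow> store_low_stable A \<Sigma>1 \<Sigma>3"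
  by (simp add: store_low_stable_def)

lemma store_low_stable_upd: "\<not> l \<le> A \<Longrightarrow> store_low_stable A \<Sigma> (\<Sigma>(l := m))"
  by (simp add: store_low_stable_def)

lemma heap_low_stable_refl: "heap_low_stable A \<mu> \<mu>"
  by (simp add: heap_low_stable_def)

lemma heap_low_stable_trans:
  assumes "heap_low_stable A \<mu>1 \<mu>2" "heap_low_stable A \<mu>2 \<mu>3"
  shows "heap_low_stable A \<mu>1 \<mu>3"
  unfolding heap_low_stable_def
proof (intro conjI allI impI)
  show "length \<mu>1 \<le> length \<mu>3" using assms unfolding heap_low_stable_def by linarith
  fix n assume "n < length \<mu>1"
  with assms show "\<mu>3 ! n = \<mu>1 ! n \<or> \<not> vlabel (\<mu>1 ! n) \<le> A \<and> \<not> vlabel (\<mu>3 ! n) \<le> A"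
    unfolding heap_low_stable_def by (metis less_le_trans)
qed

lemma heap_low_stable_lupd:
  assumes "n \<le> length \<mu>" and "n < length \<mu> \<Longrightarrow> \<not> vlabel (\<mu> ! n) \<le> A \<and> \<not> vlabel v \<le> A"
  shows "heap_low_stable A \<mu> (lupd \<mu> n v)"
  using assms unfolding heap_low_stable_def lupd_def by (auto simp: nth_append nth_list_update)

lemma store_eq_low_stable:
  "store_eq A \<beta> \<Sigma>1 \<Sigma>2 \<Longrightarrow> store_low_stable A \<Sigma>1 \<Sigma>1' \<Longrightarrow> store_low_stable A \<Sigma>2 \<Sigma>2'
   \<Longrightarrow> store_eq A \<beta> \<Sigma>1' \<Sigma>2'"
  unfolding store_eq_def store_low_stable_def mem_eq_def by metis

lemma heap_eq_low_stable:
  assumes "heap_eq A \<beta> \<mu>1 \<mu>2" "heap_low_stable A \<mu>1 \<mu>1'" "heap_low_stable A \<mu>2 \<mu>2'"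
  shows "heap_eq A \<beta> \<mu>1' \<mu>2'"
proof -
  have "veq A \<beta> (\<mu>1' ! n1) (\<mu>2' ! n2)" if "\<beta> n1 = Some n2" for n1 n2
  proof -
    from assms(1) that have "n1 < length \<mu>1" "n2 < length \<mu>2" and related: "veq A \<beta> (\<mu>1 ! n1) (\<mu>2 ! n2)"
      by (rule heap_eq_SomeD)+
    with assms(2,3) have
      "\<mu>1' ! n1 = \<mu>1 ! n1 \<or> \<not> vlabel (\<mu>1 ! n1) \<le> A \<and> \<not> vlabel (\<mu>1' ! n1) \<le> A"
      "\<mu>2' ! n2 = \<mu>2 ! n2 \<or> \<not> vlabel (\<mu>2 ! n2) \<le> A \<and> \<not> vlabel (\<mu>2' ! n2) \<le> A"
      unfolding heap_low_stable_def by blast+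
    with related veq_vlabel_low_iff[OF related] show ?thesis by (metis veq_high)
  qed
  with assms show ?thesis unfolding heap_eq_def heap_low_stable_def by auto
qed

lemma eval_pc_le_vlabel: "eval \<theta> pc c c' \<Longrightarrow> pc \<le> vlabel (snd (snd c'))"
proof (induction rule: eval.induct)
  case (ETaint \<theta> pc \<Sigma> \<mu> e1 \<Sigma>1 \<mu>1 l l' e2 c')
  then have "pc \<le> l'" "l' \<le> l" "l \<le> vlabel (snd (snd c'))" by simp_all
  then show ?case by (meson order_trans)
qed (auto intro: le_supI1 le_supI2)

lemma eval_high_pc_low_stable:
  "eval \<theta> pc c c' \<Longrightarrow> \<not> pc \<le> A \<Longrightarrow>
     store_low_stable A (fst c) (fst c') \<and> heap_low_stable A (fst (snd c)) (fst (snd c'))"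
proof (induction rule: eval.induct)
  case (ETaint \<theta> pc \<Sigma> \<mu> e1 \<Sigma>1 \<mu>1 l l' e2 c')
  have "pc \<le> l'" using eval_pc_le_vlabel[OF ETaint.hyps(1)] by simp
  with ETaint.prems ETaint.hyps(2) have "\<not> l \<le> A" by (meson order_trans)
  with ETaint show ?case by (metis fst_conv snd_conv store_low_stable_trans heap_low_stable_trans)
next
  case (ENew \<theta> pc \<Sigma> \<mu> e \<Sigma>' \<mu>' r l n)
  have "pc \<le> l" using eval_pc_le_vlabel[OF ENew.hyps(1)] by simp
  with ENew.prems have "\<not> l \<le> A" by (meson order_trans)
  with ENew show ?case by (metis fst_conv snd_conv store_low_stable_trans store_low_stable_upd)
next
  case (EWrite \<theta> pc \<Sigma> \<mu> e1 \<Sigma>1 \<mu>1 l n l1 e2 \<Sigma>2 \<mu>2 r l2)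
  have "pc \<le> l1" using eval_pc_le_vlabel[OF EWrite.hyps(1)] by simp
  with EWrite.prems EWrite.hyps(2) have "\<not> l \<le> A" by (meson order_trans)
  with EWrite show ?case
    by (metis fst_conv snd_conv store_low_stable_trans store_low_stable_upd heap_low_stable_trans)
next
  case (ENewFS \<theta> pc \<Sigma> \<mu> e \<Sigma>' \<mu>' v n)
  then have "heap_low_stable A \<mu>' (lupd \<mu>' n v)" by (simp add: heap_low_stable_lupd)
  with ENewFS show ?case by (metis fst_conv snd_conv heap_low_stable_trans)
next
  case (EWriteFS \<theta> pc \<Sigma> \<mu> e1 \<Sigma>1 \<mu>1 n l e2 \<Sigma>2 \<mu>2 r2 l2 r1 l1)
  have "pc \<le> l" using eval_pc_le_vlabel[OF EWriteFS.hyps(1)] by simp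
  with EWriteFS.prems have "\<not> l \<le> A" by (meson order_trans)
  moreover from this EWriteFS.hyps(5) have "\<not> l1 \<le> A" by (meson order_trans)
  ultimately have "heap_low_stable A \<mu>2 (lupd \<mu>2 n (Val r2 (sup l2 l)))"
    using EWriteFS.hyps(3,4) by (intro heap_low_stable_lupd) (auto simp: le_sup_iff)
  with EWriteFS show ?case by (metis fst_conv snd_conv store_low_stable_trans heap_low_stable_trans)
qed (simp_all add: le_sup_iff store_low_stable_refl heap_low_stable_refl,
     (meson store_low_stable_trans heap_low_stable_trans)+)

lemma eval_high_pc_fconf_eq:
  assumes "eval \<theta>1 pc1 (\<Sigma>1, \<mu>1, e1) c1'" "eval \<theta>2 pc2 (\<Sigma>2, \<mu>2, e2) c2'"
    and "\<not> pc1 \<le> A" "\<not> pc2 \<le> A" "store_eq A \<beta> \<Sigma>1 \<Sigma>2" "heap_eq A \<beta> \<mu>1 \<mu>2"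
  shows "fconf_eq A \<beta> c1' c2'"
proof -
  obtain \<Sigma>1' \<mu>1' v1 \<Sigma>2' \<mu>2' v2 where c': "c1' = (\<Sigma>1', \<mu>1', v1)" "c2' = (\<Sigma>2', \<mu>2', v2)"
    by (cases c1', cases c2') auto
  have "store_eq A \<beta> \<Sigma>1' \<Sigma>2'" "heap_eq A \<beta> \<mu>1' \<mu>2'"
    using eval_high_pc_low_stable[OF assms(1,3)] eval_high_pc_low_stable[OF assms(2,4)] c' assms(5,6)
    by (auto intro: store_eq_low_stable heap_eq_low_stable)
  moreover have "pc1 \<le> vlabel v1" "pc2 \<le> vlabel v2"
    using eval_pc_le_vlabel[OF assms(1)] eval_pc_le_vlabel[OF assms(2)] c' by simp_all
  with assms(3,4) have "veq A \<beta> v1 v2" by (meson order_trans veq_high)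
  ultimately show ?thesis using c' by simp
qed

section \<open>Noninterference of a single run\<close>

(* The conclusion of the theorem for one fixed run of the first program, in the form of the
   induction hypothesis over that run. *)
definition noninterferent :: "'l::semilattice_sup \<Rightarrow> 'l env \<Rightarrow> 'l \<Rightarrow> 'l iconf \<Rightarrow> 'l fconf \<Rightarrow> bool" where
  "noninterferent A \<theta>1 pc c1 c1' \<longleftrightarrow>
     (\<forall>\<beta> \<theta>2 c2 c2'. pbij \<beta> \<longrightarrow> iconf_eq A \<beta> c1 c2 \<longrightarrow> env_eq A \<beta> \<theta>1 \<theta>2 \<longrightarrow> eval \<theta>2 pc c2 c2' \<longrightarrow>
        (\<exists>\<beta>'. pbij \<beta>' \<and> \<beta> \<subseteq>\<^sub>m \<beta>' \<and> fconf_eq A \<beta>' c1' c2'))"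

lemma noninterferentI:
  assumes "\<And>\<beta> \<theta>2 \<Sigma>2 \<mu>2 c2'. pbij \<beta> \<Longrightarrow> store_eq A \<beta> \<Sigma>1 \<Sigma>2 \<Longrightarrow> heap_eq A \<beta> \<mu>1 \<mu>2 \<Longrightarrow>
      env_eq A \<beta> \<theta>1 \<theta>2 \<Longrightarrow> eval \<theta>2 pc (\<Sigma>2, \<mu>2, e) c2' \<Longrightarrow>
      \<exists>\<beta>'. pbij \<beta>' \<and> \<beta> \<subseteq>\<^sub>m \<beta>' \<and> fconf_eq A \<beta>' c1' c2'"
  shows "noninterferent A \<theta>1 pc (\<Sigma>1, \<mu>1, e) c1'"
  unfolding noninterferent_def
proof (intro allI impI)
  fix \<beta> \<theta>2 c2 c2'
  assume "pbij \<beta>" and start: "iconf_eq A \<beta> (\<Sigma>1, \<mu>1, e) c2"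
    and env: "env_eq A \<beta> \<theta>1 \<theta>2" and run: "eval \<theta>2 pc c2 c2'"
  obtain \<Sigma>2 \<mu>2 e2 where c2: "c2 = (\<Sigma>2, \<mu>2, e2)" by (cases c2)
  with start have store: "store_eq A \<beta> \<Sigma>1 \<Sigma>2" and heap: "heap_eq A \<beta> \<mu>1 \<mu>2" and "e2 = e"
    by simp_all
  with run c2 have "eval \<theta>2 pc (\<Sigma>2, \<mu>2, e) c2'" by simp
  then show "\<exists>\<beta>'. pbij \<beta>' \<and> \<beta> \<subseteq>\<^sub>m \<beta>' \<and> fconf_eq A \<beta>' c1' c2'"
    by (rule assms[OF \<open>pbij \<beta>\<close> store heap env])
qed

lemma noninterferentD:
  assumes "noninterferent A \<theta>1 pc (\<Sigma>1, \<mu>1, e) c1'" "pbij \<beta>"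
    "store_eq A \<beta> \<Sigma>1 \<Sigma>2" "heap_eq A \<beta> \<mu>1 \<mu>2" "env_eq A \<beta> \<theta>1 \<theta>2"
    "eval \<theta>2 pc (\<Sigma>2, \<mu>2, e) c2'"
  shows "\<exists>\<beta>'. pbij \<beta>' \<and> \<beta> \<subseteq>\<^sub>m \<beta>' \<and> fconf_eq A \<beta>' c1' c2'"
proof -
  have "iconf_eq A \<beta> (\<Sigma>1, \<mu>1, e) (\<Sigma>2, \<mu>2, e)" using assms(3,4) by simp
  with assms(1,2,5,6) show ?thesis unfolding noninterferent_def by blast
qed

lemma noninterferentE:
  assumes "noninterferent A \<theta>1 pc (\<Sigma>1, \<mu>1, e) (\<Sigma>1', \<mu>1', v1)" "pbij \<beta>"
    "store_eq A \<beta> \<Sigma>1 \<Sigma>2" "heap_eq A \<beta> \<mu>1 \<mu>2" "env_eq A \<beta> \<theta>1 \<theta>2"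
    "eval \<theta>2 pc (\<Sigma>2, \<mu>2, e) (\<Sigma>2', \<mu>2', v2)"
  obtains \<beta>' where "pbij \<beta>'" "\<beta> \<subseteq>\<^sub>m \<beta>'" "store_eq A \<beta>' \<Sigma>1' \<Sigma>2'" "heap_eq A \<beta>' \<mu>1' \<mu>2'"
    "env_eq A \<beta>' \<theta>1 \<theta>2" "veq A \<beta>' v1 v2"
proof -
  obtain \<beta>' where "pbij \<beta>'" "\<beta> \<subseteq>\<^sub>m \<beta>'" and related: "fconf_eq A \<beta>' (\<Sigma>1', \<mu>1', v1) (\<Sigma>2', \<mu>2', v2)"
    using noninterferentD[OF assms] by blast
  from related have "store_eq A \<beta>' \<Sigma>1' \<Sigma>2'" "heap_eq A \<beta>' \<mu>1' \<mu>2'" "veq A \<beta>' v1 v2" by simp_all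
  moreover have "env_eq A \<beta>' \<theta>1 \<theta>2" using assms(5) \<open>\<beta> \<subseteq>\<^sub>m \<beta>'\<close> by (rule env_eq_mono)
  ultimately show thesis using \<open>pbij \<beta>'\<close> \<open>\<beta> \<subseteq>\<^sub>m \<beta>'\<close> by (intro that)
qed

lemma noninterferent_continue:
  assumes "noninterferent A \<theta>1 pc1 (\<Sigma>1, \<mu>1, e1) c1'" "eval \<theta>1 pc1 (\<Sigma>1, \<mu>1, e1) c1'"
    and "eval \<theta>2 pc2 (\<Sigma>2, \<mu>2, e2) c2'"
    and "pbij \<beta>" "store_eq A \<beta> \<Sigma>1 \<Sigma>2" "heap_eq A \<beta> \<mu>1 \<mu>2"
    and "pc1 = pc2 \<and> e1 = e2 \<and> env_eq A \<beta> \<theta>1 \<theta>2 \<or> \<not> pc1 \<le> A \<and> \<not> pc2 \<le> A"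
  shows "\<exists>\<beta>'. pbij \<beta>' \<and> \<beta> \<subseteq>\<^sub>m \<beta>' \<and> fconf_eq A \<beta>' c1' c2'"
  using assms(7)
proof
  assume "pc1 = pc2 \<and> e1 = e2 \<and> env_eq A \<beta> \<theta>1 \<theta>2"
  with assms(3) have "env_eq A \<beta> \<theta>1 \<theta>2" "eval \<theta>2 pc1 (\<Sigma>2, \<mu>2, e1) c2'" by simp_all
  then show ?thesis by (rule noninterferentD[OF assms(1,4-6)])
next
  assume "\<not> pc1 \<le> A \<and> \<not> pc2 \<le> A"
  then have "fconf_eq A \<beta> c1' c2'" using assms(2,3,5,6) by (blast intro: eval_high_pc_fconf_eq)
  with assms(4) map_le_refl show ?thesis by blast
qed

inductive_cases VarE: "eval \<theta> pc (\<Sigma>, \<mu>, Var i) c'"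
inductive_cases UnitE: "eval \<theta> pc (\<Sigma>, \<mu>, Unit) c'"
inductive_cases LblE: "eval \<theta> pc (\<Sigma>, \<mu>, Lbl l) c'"
inductive_cases LamE: "eval \<theta> pc (\<Sigma>, \<mu>, Lam e) c'"
inductive_cases GetLabelE: "eval \<theta> pc (\<Sigma>, \<mu>, GetLabel) c'"
inductive_cases AppE: "eval \<theta> pc (\<Sigma>, \<mu>, App e1 e2) c'"
inductive_cases InlE: "eval \<theta> pc (\<Sigma>, \<mu>, Inl e) c'"
inductive_cases InrE: "eval \<theta> pc (\<Sigma>, \<mu>, Inr e) c'"
inductive_cases CaseE: "eval \<theta> pc (\<Sigma>, \<mu>, Case e e1 e2) c'"
inductive_cases PairE: "eval \<theta> pc (\<Sigma>, \<mu>, Pair e1 e2) c'"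
inductive_cases FstE: "eval \<theta> pc (\<Sigma>, \<mu>, Fst e) c'"
inductive_cases SndE: "eval \<theta> pc (\<Sigma>, \<mu>, Snd e) c'"
inductive_cases LabelOfE: "eval \<theta> pc (\<Sigma>, \<mu>, LabelOf e) c'"
inductive_cases CmpE: "eval \<theta> pc (\<Sigma>, \<mu>, Cmp e1 e2) c'"
inductive_cases TaintE: "eval \<theta> pc (\<Sigma>, \<mu>, Taint e1 e2) c'"
inductive_cases NewIE: "eval \<theta> pc (\<Sigma>, \<mu>, New I e) c'"
inductive_cases ReadIE: "eval \<theta> pc (\<Sigma>, \<mu>, Read I e) c'"
inductive_cases WriteIE: "eval \<theta> pc (\<Sigma>, \<mu>, Write I e1 e2) c'"
inductive_cases LabelOfRefIE: "eval \<theta> pc (\<Sigma>, \<mu>, LabelOfRef I e) c'"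
inductive_cases NewSE: "eval \<theta> pc (\<Sigma>, \<mu>, New S e) c'"
inductive_cases ReadSE: "eval \<theta> pc (\<Sigma>, \<mu>, Read S e) c'"
inductive_cases WriteSE: "eval \<theta> pc (\<Sigma>, \<mu>, Write S e1 e2) c'"
inductive_cases LabelOfRefSE: "eval \<theta> pc (\<Sigma>, \<mu>, LabelOfRef S e) c'"

lemma noninterferent_stateless:
  assumes "\<And>\<theta>2 \<Sigma>2 \<mu>2 c2'. eval \<theta>2 pc (\<Sigma>2, \<mu>2, e) c2' \<Longrightarrow>
      \<exists>v2. c2' = (\<Sigma>2, \<mu>2, v2) \<and> (\<forall>\<beta>. env_eq A \<beta> \<theta>1 \<theta>2 \<longrightarrow> veq A \<beta> v1 v2)"
  shows "noninterferent A \<theta>1 pc (\<Sigma>1, \<mu>1, e) (\<Sigma>1, \<mu>1, v1)"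
proof (rule noninterferentI, goal_cases related)
  case (related \<beta> \<theta>2 \<Sigma>2 \<mu>2 c2')
  with assms obtain v2 where "c2' = (\<Sigma>2, \<mu>2, v2)" "veq A \<beta> v1 v2" by blast
  with related show ?case by (intro exI[of _ \<beta>]) simp
qed

lemma noninterferent_App:
  assumes "noninterferent A \<theta> pc (\<Sigma>, \<mu>, e1) (\<Sigma>1, \<mu>1, Val (Clos e \<theta>') l)"
    and "noninterferent A \<theta> pc (\<Sigma>1, \<mu>1, e2) (\<Sigma>2, \<mu>2, v)"
    and body_run: "eval (v # \<theta>') (sup pc l) (\<Sigma>2, \<mu>2, e) c'"
    and body: "noninterferent A (v # \<theta>') (sup pc l) (\<Sigma>2, \<mu>2, e) c'"
  shows "noninterferent A \<theta> pc (\<Sigma>, \<mu>, App e1 e2) c'"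
proof (rule noninterferentI, goal_cases related)
  case (related \<beta> \<theta>2 S m c2')
  then obtain S1 m1 e' \<theta>'' l' S2 m2 w where
    run1: "eval \<theta>2 pc (S, m, e1) (S1, m1, Val (Clos e' \<theta>'') l')" and
    run2: "eval \<theta>2 pc (S1, m1, e2) (S2, m2, w)" and
    run3: "eval (w # \<theta>'') (sup pc l') (S2, m2, e') c2'"
    by (blast elim: AppE)
  obtain \<beta>1 where \<beta>1: "pbij \<beta>1" "\<beta> \<subseteq>\<^sub>m \<beta>1" "store_eq A \<beta>1 \<Sigma>1 S1" "heap_eq A \<beta>1 \<mu>1 m1"
      "env_eq A \<beta>1 \<theta> \<theta>2" and clos: "veq A \<beta>1 (Val (Clos e \<theta>') l) (Val (Clos e' \<theta>'') l')"
    by (rule noninterferentE[OF assms(1) related(1-4) run1])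
  obtain \<beta>2 where \<beta>2: "pbij \<beta>2" "\<beta>1 \<subseteq>\<^sub>m \<beta>2" "store_eq A \<beta>2 \<Sigma>2 S2" "heap_eq A \<beta>2 \<mu>2 m2"
      "env_eq A \<beta>2 \<theta> \<theta>2" and arg: "veq A \<beta>2 v w"
    by (rule noninterferentE[OF assms(2) \<beta>1(1,3-5) run2])
  have "veq A \<beta>2 (Val (Clos e \<theta>') l) (Val (Clos e' \<theta>'') l')"
    using clos \<beta>2(2) by (rule veq_mono)
  with arg have "sup pc l = sup pc l' \<and> e = e' \<and> env_eq A \<beta>2 (v # \<theta>') (w # \<theta>'')
      \<or> \<not> sup pc l \<le> A \<and> \<not> sup pc l' \<le> A"
    by (auto simp: env_eq_def le_sup_iff)
  then have "\<exists>\<beta>'. pbij \<beta>' \<and> \<beta>2 \<subseteq>\<^sub>m \<beta>' \<and> fconf_eq A \<beta>' c' c2'"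
    by (rule noninterferent_continue[OF body body_run run3 \<beta>2(1,3,4)])
  with \<beta>1(2) \<beta>2(2) show ?case by (meson map_le_trans)
qed

lemma noninterferent_Case:
  assumes "noninterferent A \<theta> pc (\<Sigma>, \<mu>, e) (\<Sigma>1, \<mu>1, Val r l)"
    and "r = RInl v \<and> e' = e1 \<or> r = RInr v \<and> e' = e2"
    and branch_run: "eval (v # \<theta>) (sup pc l) (\<Sigma>1, \<mu>1, e') c'"
    and branch: "noninterferent A (v # \<theta>) (sup pc l) (\<Sigma>1, \<mu>1, e') c'"
  shows "noninterferent A \<theta> pc (\<Sigma>, \<mu>, Case e e1 e2) c'"
proof (rule noninterferentI, goal_cases related)
  case (related \<beta> \<theta>2 S m c2')
  then obtain S1 m1 r' l' w e'' where
    run1: "eval \<theta>2 pc (S, m, e) (S1, m1, Val r' l')" and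
    taken: "r' = RInl w \<and> e'' = e1 \<or> r' = RInr w \<and> e'' = e2" and
    run2: "eval (w # \<theta>2) (sup pc l') (S1, m1, e'') c2'"
    by (blast elim: CaseE)
  obtain \<beta>1 where \<beta>1: "pbij \<beta>1" "\<beta> \<subseteq>\<^sub>m \<beta>1" "store_eq A \<beta>1 \<Sigma>1 S1" "heap_eq A \<beta>1 \<mu>1 m1"
      "env_eq A \<beta>1 \<theta> \<theta>2" and scrutinee: "veq A \<beta>1 (Val r l) (Val r' l')"
    by (rule noninterferentE[OF assms(1) related(1-4) run1])
  have "sup pc l = sup pc l' \<and> e' = e'' \<and> env_eq A \<beta>1 (v # \<theta>) (w # \<theta>2)
      \<or> \<not> sup pc l \<le> A \<and> \<not> sup pc l' \<le> A"
    using assms(2) taken scrutinee \<beta>1(5) by (auto simp: env_eq_def le_sup_iff)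
  then have "\<exists>\<beta>'. pbij \<beta>' \<and> \<beta>1 \<subseteq>\<^sub>m \<beta>' \<and> fconf_eq A \<beta>' c' c2'"
    by (rule noninterferent_continue[OF branch branch_run run2 \<beta>1(1,3,4)])
  with \<beta>1(2) show ?case by (meson map_le_trans)
qed

lemma noninterferent_Taint:
  assumes "noninterferent A \<theta> pc (\<Sigma>, \<mu>, e1) (\<Sigma>1, \<mu>1, Val (RLbl l) l')" "l' \<le> l"
    and body_run: "eval \<theta> l (\<Sigma>1, \<mu>1, e2) c'"
    and body: "noninterferent A \<theta> l (\<Sigma>1, \<mu>1, e2) c'"
  shows "noninterferent A \<theta> pc (\<Sigma>, \<mu>, Taint e1 e2) c'"
proof (rule noninterferentI, goal_cases related)
  case (related \<beta> \<theta>2 S m c2')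
  then obtain S1 m1 k k' where
    run1: "eval \<theta>2 pc (S, m, e1) (S1, m1, Val (RLbl k) k')" and "k' \<le> k" and
    run2: "eval \<theta>2 k (S1, m1, e2) c2'"
    by (blast elim: TaintE)
  obtain \<beta>1 where \<beta>1: "pbij \<beta>1" "\<beta> \<subseteq>\<^sub>m \<beta>1" "store_eq A \<beta>1 \<Sigma>1 S1" "heap_eq A \<beta>1 \<mu>1 m1"
      "env_eq A \<beta>1 \<theta> \<theta>2" and label: "veq A \<beta>1 (Val (RLbl l) l') (Val (RLbl k) k')"
    by (rule noninterferentE[OF assms(1) related(1-4) run1])
  have "l = k \<or> \<not> l \<le> A \<and> \<not> k \<le> A"
  proof (cases "l' \<le> A")
    case True
    with label show ?thesis by simp
  next
    case False
    with label have "\<not> k' \<le> A" by simp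
    with False assms(2) \<open>k' \<le> k\<close> show ?thesis by (meson order_trans)
  qed
  with \<beta>1(5) have "\<exists>\<beta>'. pbij \<beta>' \<and> \<beta>1 \<subseteq>\<^sub>m \<beta>' \<and> fconf_eq A \<beta>' c' c2'"
    using noninterferent_continue[OF body body_run run2 \<beta>1(1,3,4)] by blast
  with \<beta>1(2) show ?case by (meson map_le_trans)
qed

lemma noninterferent_Inl:
  assumes "noninterferent A \<theta> pc (\<Sigma>, \<mu>, e) (\<Sigma>', \<mu>', v)"
  shows "noninterferent A \<theta> pc (\<Sigma>, \<mu>, Inl e) (\<Sigma>', \<mu>', Val (RInl v) pc)"
proof (rule noninterferentI, goal_cases related)
  case (related \<beta> \<theta>2 S m c2')
  then obtain S' m' w where run: "eval \<theta>2 pc (S, m, e) (S', m', w)"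
    and c2': "c2' = (S', m', Val (RInl w) pc)"
    by (blast elim: InlE)
  show ?case
    by (rule noninterferentE[OF assms related(1-4) run]) (auto simp: c2')
qed

lemma noninterferent_Inr:
  assumes "noninterferent A \<theta> pc (\<Sigma>, \<mu>, e) (\<Sigma>', \<mu>', v)"
  shows "noninterferent A \<theta> pc (\<Sigma>, \<mu>, Inr e) (\<Sigma>', \<mu>', Val (RInr v) pc)"
proof (rule noninterferentI, goal_cases related)
  case (related \<beta> \<theta>2 S m c2')
  then obtain S' m' w where run: "eval \<theta>2 pc (S, m, e) (S', m', w)"
    and c2': "c2' = (S', m', Val (RInr w) pc)"
    by (blast elim: InrE)
  show ?case
    by (rule noninterferentE[OF assms related(1-4) run]) (auto simp: c2')
qed

lemma noninterferent_Pair: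
  assumes "noninterferent A \<theta> pc (\<Sigma>, \<mu>, e1) (\<Sigma>1, \<mu>1, v1)"
    and "noninterferent A \<theta> pc (\<Sigma>1, \<mu>1, e2) (\<Sigma>2, \<mu>2, v2)"
  shows "noninterferent A \<theta> pc (\<Sigma>, \<mu>, Pair e1 e2) (\<Sigma>2, \<mu>2, Val (RPair v1 v2) pc)"
proof (rule noninterferentI, goal_cases related)
  case (related \<beta> \<theta>2 S m c2')
  then obtain S1 m1 w1 S2 m2 w2 where run1: "eval \<theta>2 pc (S, m, e1) (S1, m1, w1)"
    and run2: "eval \<theta>2 pc (S1, m1, e2) (S2, m2, w2)" and c2': "c2' = (S2, m2, Val (RPair w1 w2) pc)"
    by (blast elim: PairE)
  obtain \<beta>1 where \<beta>1: "pbij \<beta>1" "\<beta> \<subseteq>\<^sub>m \<beta>1" "store_eq A \<beta>1 \<Sigma>1 S1" "heap_eq A \<beta>1 \<mu>1 m1"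
      "env_eq A \<beta>1 \<theta> \<theta>2" and fst: "veq A \<beta>1 v1 w1"
    by (rule noninterferentE[OF assms(1) related(1-4) run1])
  obtain \<beta>2 where \<beta>2: "pbij \<beta>2" "\<beta>1 \<subseteq>\<^sub>m \<beta>2" "store_eq A \<beta>2 \<Sigma>2 S2" "heap_eq A \<beta>2 \<mu>2 m2"
      "env_eq A \<beta>2 \<theta> \<theta>2" and snd: "veq A \<beta>2 v2 w2"
    by (rule noninterferentE[OF assms(2) \<beta>1(1,3-5) run2])
  have "veq A \<beta>2 v1 w1" using fst \<beta>2(2) by (rule veq_mono)
  with \<beta>1(2) \<beta>2 snd c2' show ?case by (auto intro: map_le_trans)
qed

lemma noninterferent_Fst:
  assumes "noninterferent A \<theta> pc (\<Sigma>, \<mu>, e) (\<Sigma>', \<mu>', Val (RPair v1 v2) l)"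
  shows "noninterferent A \<theta> pc (\<Sigma>, \<mu>, Fst e) (\<Sigma>', \<mu>', vjoin v1 l)"
proof (rule noninterferentI, goal_cases related)
  case (related \<beta> \<theta>2 S m c2')
  then obtain S' m' w1 w2 l' where run: "eval \<theta>2 pc (S, m, e) (S', m', Val (RPair w1 w2) l')"
    and c2': "c2' = (S', m', vjoin w1 l')"
    by (blast elim: FstE)
  obtain \<beta>' where \<beta>': "pbij \<beta>'" "\<beta> \<subseteq>\<^sub>m \<beta>'" "store_eq A \<beta>' \<Sigma>' S'" "heap_eq A \<beta>' \<mu>' m'"
      "env_eq A \<beta>' \<theta> \<theta>2" and pair: "veq A \<beta>' (Val (RPair v1 v2) l) (Val (RPair w1 w2) l')"
    by (rule noninterferentE[OF assms related(1-4) run])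
  have "veq A \<beta>' (vjoin v1 l) (vjoin w1 l')"
    by (rule veq_vjoin_component[OF pair]) (use pair in auto)
  with \<beta>' c2' show ?case by auto
qed

lemma noninterferent_Snd:
  assumes "noninterferent A \<theta> pc (\<Sigma>, \<mu>, e) (\<Sigma>', \<mu>', Val (RPair v1 v2) l)"
  shows "noninterferent A \<theta> pc (\<Sigma>, \<mu>, Snd e) (\<Sigma>', \<mu>', vjoin v2 l)"
proof (rule noninterferentI, goal_cases related)
  case (related \<beta> \<theta>2 S m c2')
  then obtain S' m' w1 w2 l' where run: "eval \<theta>2 pc (S, m, e) (S', m', Val (RPair w1 w2) l')"
    and c2': "c2' = (S', m', vjoin w2 l')"
    by (blast elim: SndE)
  obtain \<beta>' where \<beta>': "pbij \<beta>'" "\<beta> \<subseteq>\<^sub>m \<beta>'" "store_eq A \<beta>' \<Sigma>' S'" "heap_eq A \<beta>' \<mu>' m'"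
      "env_eq A \<beta>' \<theta> \<theta>2" and pair: "veq A \<beta>' (Val (RPair v1 v2) l) (Val (RPair w1 w2) l')"
    by (rule noninterferentE[OF assms related(1-4) run])
  have "veq A \<beta>' (vjoin v2 l) (vjoin w2 l')"
    by (rule veq_vjoin_component[OF pair]) (use pair in auto)
  with \<beta>' c2' show ?case by auto
qed

lemma noninterferent_LabelOf:
  assumes "noninterferent A \<theta> pc (\<Sigma>, \<mu>, e) (\<Sigma>', \<mu>', Val r l)"
  shows "noninterferent A \<theta> pc (\<Sigma>, \<mu>, LabelOf e) (\<Sigma>', \<mu>', Val (RLbl l) l)"
proof (rule noninterferentI, goal_cases related)
  case (related \<beta> \<theta>2 S m c2')
  then obtain S' m' r' l' where run: "eval \<theta>2 pc (S, m, e) (S', m', Val r' l')"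
    and c2': "c2' = (S', m', Val (RLbl l') l')"
    by (blast elim: LabelOfE)
  show ?case
    by (rule noninterferentE[OF assms related(1-4) run]) (auto simp: c2')
qed

lemma noninterferent_Cmp:
  assumes "noninterferent A \<theta> pc (\<Sigma>, \<mu>, e1) (\<Sigma>1, \<mu>1, Val (RLbl l1) l1')"
    and "noninterferent A \<theta> pc (\<Sigma>1, \<mu>1, e2) (\<Sigma>2, \<mu>2, Val (RLbl l2) l2')"
  shows "noninterferent A \<theta> pc (\<Sigma>, \<mu>, Cmp e1 e2)
    (\<Sigma>2, \<mu>2, Val (if l1 \<le> l2 then RInl (Val RUnit pc) else RInr (Val RUnit pc)) (sup l1' l2'))"
proof (rule noninterferentI, goal_cases related)
  case (related \<beta> \<theta>2 S m c2')
  then obtain S1 m1 k1 k1' S2 m2 k2 k2' where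
    run1: "eval \<theta>2 pc (S, m, e1) (S1, m1, Val (RLbl k1) k1')" and
    run2: "eval \<theta>2 pc (S1, m1, e2) (S2, m2, Val (RLbl k2) k2')" and
    c2': "c2' = (S2, m2, Val (if k1 \<le> k2 then RInl (Val RUnit pc) else RInr (Val RUnit pc)) (sup k1' k2'))"
    by (elim CmpE) auto
  obtain \<beta>1 where \<beta>1: "pbij \<beta>1" "\<beta> \<subseteq>\<^sub>m \<beta>1" "store_eq A \<beta>1 \<Sigma>1 S1" "heap_eq A \<beta>1 \<mu>1 m1"
      "env_eq A \<beta>1 \<theta> \<theta>2" and fst: "veq A \<beta>1 (Val (RLbl l1) l1') (Val (RLbl k1) k1')"
    by (rule noninterferentE[OF assms(1) related(1-4) run1])
  obtain \<beta>2 where \<beta>2: "pbij \<beta>2" "\<beta>1 \<subseteq>\<^sub>m \<beta>2" "store_eq A \<beta>2 \<Sigma>2 S2" "heap_eq A \<beta>2 \<mu>2 m2"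
      "env_eq A \<beta>2 \<theta> \<theta>2" and snd: "veq A \<beta>2 (Val (RLbl l2) l2') (Val (RLbl k2) k2')"
    by (rule noninterferentE[OF assms(2) \<beta>1(1,3-5) run2])
  from fst snd have "veq A \<beta>2
      (Val (if l1 \<le> l2 then RInl (Val RUnit pc) else RInr (Val RUnit pc)) (sup l1' l2'))
      (Val (if k1 \<le> k2 then RInl (Val RUnit pc) else RInr (Val RUnit pc)) (sup k1' k2'))"
    by (auto simp: le_sup_iff)
  with \<beta>1(2) \<beta>2 c2' show ?case by (auto intro: map_le_trans)
qed

lemma noninterferent_NewI:
  assumes "noninterferent A \<theta> pc (\<Sigma>, \<mu>, e) (\<Sigma>', \<mu>', Val r l)" "n = length (\<Sigma>' l)"
  shows "noninterferent A \<theta> pc (\<Sigma>, \<mu>, New I e) (\<Sigma>'(l := lupd (\<Sigma>' l) n r), \<mu>', Val (RRefI l n) pc)"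
proof (rule noninterferentI, goal_cases related)
  case (related \<beta> \<theta>2 S m c2')
  then obtain S' m' r' l' where run: "eval \<theta>2 pc (S, m, e) (S', m', Val r' l')"
    and c2': "c2' = (S'(l' := lupd (S' l') (length (S' l')) r'), m', Val (RRefI l' (length (S' l'))) pc)"
    by (blast elim: NewIE)
  obtain \<beta>' where \<beta>': "pbij \<beta>'" "\<beta> \<subseteq>\<^sub>m \<beta>'" "store_eq A \<beta>' \<Sigma>' S'" "heap_eq A \<beta>' \<mu>' m'"
      "env_eq A \<beta>' \<theta> \<theta>2" and val: "veq A \<beta>' (Val r l) (Val r' l')"
    by (rule noninterferentE[OF assms(1) related(1-4) run])
  have low: "l' = l \<and> length (S' l') = n \<and> req A \<beta>' r r'" if "l \<le> A"
    using val that \<beta>'(3) list_all2_lengthD assms(2) unfolding store_eq_def mem_eq_def by fastforce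
  have "l \<le> A \<longleftrightarrow> l' \<le> A" using val by auto
  with low \<beta>' c2' show ?case by (auto intro!: store_eq_lupd)
qed

lemma noninterferent_ReadI:
  assumes "noninterferent A \<theta> pc (\<Sigma>, \<mu>, e) (\<Sigma>', \<mu>', Val (RRefI l n) l')"
    and "n < length (\<Sigma>' l)"
  shows "noninterferent A \<theta> pc (\<Sigma>, \<mu>, Read I e) (\<Sigma>', \<mu>', Val (\<Sigma>' l ! n) (sup l l'))"
proof (rule noninterferentI, goal_cases related)
  case (related \<beta> \<theta>2 S m c2')
  then obtain S' m' k n' k' where run: "eval \<theta>2 pc (S, m, e) (S', m', Val (RRefI k n') k')"
    and c2': "c2' = (S', m', Val (S' k ! n') (sup k k'))"
    by (blast elim: ReadIE)
  obtain \<beta>' where \<beta>': "pbij \<beta>'" "\<beta> \<subseteq>\<^sub>m \<beta>'" "store_eq A \<beta>' \<Sigma>' S'" "heap_eq A \<beta>' \<mu>' m'"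
      "env_eq A \<beta>' \<theta> \<theta>2" and ref: "veq A \<beta>' (Val (RRefI l n) l') (Val (RRefI k n') k')"
    by (rule noninterferentE[OF assms(1) related(1-4) run])
  have "req A \<beta>' (\<Sigma>' l ! n) (S' l ! n)" if "l \<le> A"
    using \<beta>'(3) that assms(2) unfolding store_eq_def mem_eq_def by (auto dest: list_all2_nthD)
  with ref have "veq A \<beta>' (Val (\<Sigma>' l ! n) (sup l l')) (Val (S' k ! n') (sup k k'))"
    by (auto simp: le_sup_iff)
  with \<beta>' c2' show ?case by auto
qed

lemma noninterferent_WriteI:
  assumes "noninterferent A \<theta> pc (\<Sigma>, \<mu>, e1) (\<Sigma>1, \<mu>1, Val (RRefI l n) l1)" "l1 \<le> l"
    and "noninterferent A \<theta> pc (\<Sigma>1, \<mu>1, e2) (\<Sigma>2, \<mu>2, Val r l2)" "l2 \<le> l"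
  shows "noninterferent A \<theta> pc (\<Sigma>, \<mu>, Write I e1 e2) (\<Sigma>2(l := lupd (\<Sigma>2 l) n r), \<mu>2, Val RUnit pc)"
proof (rule noninterferentI, goal_cases related)
  case (related \<beta> \<theta>2 S m c2')
  then obtain S1 m1 k n' k1 S2 m2 r' k2 where
    run1: "eval \<theta>2 pc (S, m, e1) (S1, m1, Val (RRefI k n') k1)" and "k1 \<le> k" and
    run2: "eval \<theta>2 pc (S1, m1, e2) (S2, m2, Val r' k2)" and
    c2': "c2' = (S2(k := lupd (S2 k) n' r'), m2, Val RUnit pc)"
    by (elim WriteIE) blast
  obtain \<beta>1 where \<beta>1: "pbij \<beta>1" "\<beta> \<subseteq>\<^sub>m \<beta>1" "store_eq A \<beta>1 \<Sigma>1 S1" "heap_eq A \<beta>1 \<mu>1 m1"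
      "env_eq A \<beta>1 \<theta> \<theta>2" and ref: "veq A \<beta>1 (Val (RRefI l n) l1) (Val (RRefI k n') k1)"
    by (rule noninterferentE[OF assms(1) related(1-4) run1])
  obtain \<beta>2 where \<beta>2: "pbij \<beta>2" "\<beta>1 \<subseteq>\<^sub>m \<beta>2" "store_eq A \<beta>2 \<Sigma>2 S2" "heap_eq A \<beta>2 \<mu>2 m2"
      "env_eq A \<beta>2 \<theta> \<theta>2" and val: "veq A \<beta>2 (Val r l2) (Val r' k2)"
    by (rule noninterferentE[OF assms(3) \<beta>1(1,3-5) run2])
  have "(l \<le> A \<longleftrightarrow> k \<le> A) \<and> (l \<le> A \<longrightarrow> k = l \<and> n' = n)"
  proof (cases "l1 \<le> A")
    case True
    with ref show ?thesis by auto
  next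
    case False
    with ref have "\<not> k1 \<le> A" by simp
    with False assms(2) \<open>k1 \<le> k\<close> show ?thesis by (meson order_trans)
  qed
  moreover have "req A \<beta>2 r r'" if "l \<le> A"
  proof -
    from assms(4) that have "l2 \<le> A" by (rule order_trans)
    with val show ?thesis by simp
  qed
  ultimately have "store_eq A \<beta>2 (\<Sigma>2(l := lupd (\<Sigma>2 l) n r)) (S2(k := lupd (S2 k) n' r'))"
    using \<beta>2(3) by (blast intro: store_eq_lupd)
  with \<beta>1(2) \<beta>2 c2' show ?case by (auto intro: map_le_trans)
qed

lemma noninterferent_LabelOfRefI:
  assumes "noninterferent A \<theta> pc (\<Sigma>, \<mu>, e) (\<Sigma>', \<mu>', Val (RRefI l n) l')"
  shows "noninterferent A \<theta> pc (\<Sigma>, \<mu>, LabelOfRef I e) (\<Sigma>', \<mu>', Val (RLbl l) (sup l l'))"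
proof (rule noninterferentI, goal_cases related)
  case (related \<beta> \<theta>2 S m c2')
  then obtain S' m' k n' k' where run: "eval \<theta>2 pc (S, m, e) (S', m', Val (RRefI k n') k')"
    and c2': "c2' = (S', m', Val (RLbl k) (sup k k'))"
    by (blast elim: LabelOfRefIE)
  show ?case
    by (rule noninterferentE[OF assms related(1-4) run]) (auto simp: c2' le_sup_iff)
qed

lemma noninterferent_NewS:
  assumes "noninterferent A \<theta> pc (\<Sigma>, \<mu>, e) (\<Sigma>', \<mu>', v)" "n = length \<mu>'"
  shows "noninterferent A \<theta> pc (\<Sigma>, \<mu>, New S e) (\<Sigma>', lupd \<mu>' n v, Val (RRefS n) pc)"
proof (rule noninterferentI, goal_cases related)
  case (related \<beta> \<theta>2 S m c2')
  then obtain S' m' w where run: "eval \<theta>2 pc (S, m, e) (S', m', w)"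
    and c2': "c2' = (S', m' @ [w], Val (RRefS (length m')) pc)"
    by (auto elim: NewSE simp: lupd_def)
  obtain \<beta>1 where \<beta>1: "pbij \<beta>1" "\<beta> \<subseteq>\<^sub>m \<beta>1" "store_eq A \<beta>1 \<Sigma>' S'" "heap_eq A \<beta>1 \<mu>' m'"
      "env_eq A \<beta>1 \<theta> \<theta>2" and val: "veq A \<beta>1 v w"
    by (rule noninterferentE[OF assms(1) related(1-4) run])
  define \<beta>2 where "\<beta>2 = \<beta>1(length \<mu>' \<mapsto> length m')"
  have "pbij \<beta>2" "\<beta>1 \<subseteq>\<^sub>m \<beta>2" "heap_eq A \<beta>2 (\<mu>' @ [v]) (m' @ [w])"
    using heap_eq_alloc[OF \<beta>1(1,4) val] unfolding \<beta>2_def by auto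
  moreover have "store_eq A \<beta>2 \<Sigma>' S'" using \<beta>1(3) \<open>\<beta>1 \<subseteq>\<^sub>m \<beta>2\<close> by (rule store_eq_mono)
  moreover have "req A \<beta>2 (RRefS n) (RRefS (length m'))" using assms(2) unfolding \<beta>2_def by simp
  ultimately show ?case using \<beta>1(2) c2' assms(2) by (auto simp: lupd_def intro: map_le_trans)
qed

lemma noninterferent_ReadS:
  assumes "noninterferent A \<theta> pc (\<Sigma>, \<mu>, e) (\<Sigma>', \<mu>', Val (RRefS n) l)"
    and "\<mu>' ! n = Val r l'"
  shows "noninterferent A \<theta> pc (\<Sigma>, \<mu>, Read S e) (\<Sigma>', \<mu>', Val r (sup l l'))"
proof (rule noninterferentI, goal_cases related)
  case (related \<beta> \<theta>2 S m c2')
  then obtain S' m' n' k r' k' where run: "eval \<theta>2 pc (S, m, e) (S', m', Val (RRefS n') k)"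
    and "m' ! n' = Val r' k'" and c2': "c2' = (S', m', Val r' (sup k k'))"
    by (blast elim: ReadSE)
  obtain \<beta>' where \<beta>': "pbij \<beta>'" "\<beta> \<subseteq>\<^sub>m \<beta>'" "store_eq A \<beta>' \<Sigma>' S'" "heap_eq A \<beta>' \<mu>' m'"
      "env_eq A \<beta>' \<theta> \<theta>2" and ref: "veq A \<beta>' (Val (RRefS n) l) (Val (RRefS n') k)"
    by (rule noninterferentE[OF assms(1) related(1-4) run])
  have "veq A \<beta>' (Val r l') (Val r' k')" if "l \<le> A"
    using ref that \<beta>'(4) assms(2) \<open>m' ! n' = Val r' k'\<close> unfolding heap_eq_def by fastforce
  with ref have "veq A \<beta>' (Val r (sup l l')) (Val r' (sup k k'))"
    by (cases "l \<le> A") (auto simp: le_sup_iff)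
  with \<beta>' c2' show ?case by auto
qed

lemma noninterferent_LabelOfRefS:
  assumes "noninterferent A \<theta> pc (\<Sigma>, \<mu>, e) (\<Sigma>', \<mu>', Val (RRefS n) l1)"
    and "\<mu>' ! n = Val r l2"
  shows "noninterferent A \<theta> pc (\<Sigma>, \<mu>, LabelOfRef S e) (\<Sigma>', \<mu>', Val (RLbl l2) (sup l1 l2))"
proof (rule noninterferentI, goal_cases related)
  case (related \<beta> \<theta>2 S m c2')
  then obtain S' m' n' k1 r' k2 where run: "eval \<theta>2 pc (S, m, e) (S', m', Val (RRefS n') k1)"
    and "m' ! n' = Val r' k2" and c2': "c2' = (S', m', Val (RLbl k2) (sup k1 k2))"
    by (blast elim: LabelOfRefSE)
  obtain \<beta>' where \<beta>': "pbij \<beta>'" "\<beta> \<subseteq>\<^sub>m \<beta>'" "store_eq A \<beta>' \<Sigma>' S'" "heap_eq A \<beta>' \<mu>' m'"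
      "env_eq A \<beta>' \<theta> \<theta>2" and ref: "veq A \<beta>' (Val (RRefS n) l1) (Val (RRefS n') k1)"
    by (rule noninterferentE[OF assms(1) related(1-4) run])
  have "veq A \<beta>' (Val r l2) (Val r' k2)" if "l1 \<le> A"
    using ref that \<beta>'(4) assms(2) \<open>m' ! n' = Val r' k2\<close> unfolding heap_eq_def by fastforce
  with ref have "veq A \<beta>' (Val (RLbl l2) (sup l1 l2)) (Val (RLbl k2) (sup k1 k2))"
    by (cases "l1 \<le> A") (auto simp: le_sup_iff)
  with \<beta>' c2' show ?case by auto
qed

lemma noninterferent_WriteS:
  assumes "noninterferent A \<theta> pc (\<Sigma>, \<mu>, e1) (\<Sigma>1, \<mu>1, Val (RRefS n) l)"
    and "noninterferent A \<theta> pc (\<Sigma>1, \<mu>1, e2) (\<Sigma>2, \<mu>2, Val r l2)"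
    and "n < length \<mu>2" "\<mu>2 ! n = Val r0 l0" "l \<le> l0"
  shows "noninterferent A \<theta> pc (\<Sigma>, \<mu>, Write S e1 e2) (\<Sigma>2, lupd \<mu>2 n (Val r (sup l2 l)), Val RUnit pc)"
proof (rule noninterferentI, goal_cases related)
  case (related \<beta> \<theta>2 S m c2')
  then obtain S1 m1 n' k S2 m2 r' k2 r0' k0 where
    run1: "eval \<theta>2 pc (S, m, e1) (S1, m1, Val (RRefS n') k)" and
    run2: "eval \<theta>2 pc (S1, m1, e2) (S2, m2, Val r' k2)" and
    "n' < length m2" "m2 ! n' = Val r0' k0" "k \<le> k0" and
    c2': "c2' = (S2, m2[n' := Val r' (sup k2 k)], Val RUnit pc)"
    by (elim WriteSE) (auto simp: lupd_def)
  obtain \<beta>1 where \<beta>1: "pbij \<beta>1" "\<beta> \<subseteq>\<^sub>m \<beta>1" "store_eq A \<beta>1 \<Sigma>1 S1" "heap_eq A \<beta>1 \<mu>1 m1"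
      "env_eq A \<beta>1 \<theta> \<theta>2" and ref: "veq A \<beta>1 (Val (RRefS n) l) (Val (RRefS n') k)"
    by (rule noninterferentE[OF assms(1) related(1-4) run1])
  obtain \<beta>2 where \<beta>2: "pbij \<beta>2" "\<beta>1 \<subseteq>\<^sub>m \<beta>2" "store_eq A \<beta>2 \<Sigma>2 S2" "heap_eq A \<beta>2 \<mu>2 m2"
      "env_eq A \<beta>2 \<theta> \<theta>2" and val: "veq A \<beta>2 (Val r l2) (Val r' k2)"
    by (rule noninterferentE[OF assms(2) \<beta>1(1,3-5) run2])
  have "heap_eq A \<beta>2 (\<mu>2[n := Val r (sup l2 l)]) (m2[n' := Val r' (sup k2 k)])"
  proof (cases "l \<le> A")
    case True
    with ref have "k = l" "\<beta>1 n = Some n'" by auto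
    moreover from \<beta>2(2) \<open>\<beta>1 n = Some n'\<close> have "\<beta>2 n = Some n'" by (rule map_le_SomeD)
    ultimately show ?thesis using \<beta>2(1,4) veq_vjoin[OF val] by (auto intro: heap_eq_update)
  next
    case False
    with ref have "\<not> k \<le> A" by auto
    with False assms(5) \<open>k \<le> k0\<close> have "\<not> l0 \<le> A" "\<not> k0 \<le> A" by (meson order_trans)+
    with False \<open>\<not> k \<le> A\<close> assms(3,4) \<open>n' < length m2\<close> \<open>m2 ! n' = Val r0' k0\<close>
    have "heap_low_stable A \<mu>2 (lupd \<mu>2 n (Val r (sup l2 l)))"
      and "heap_low_stable A m2 (lupd m2 n' (Val r' (sup k2 k)))"
      by (auto intro!: heap_low_stable_lupd simp: le_sup_iff)
    then have "heap_low_stable A \<mu>2 (\<mu>2[n := Val r (sup l2 l)])"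
      and "heap_low_stable A m2 (m2[n' := Val r' (sup k2 k)])"
      using assms(3) \<open>n' < length m2\<close> by (simp_all add: lupd_def)
    with \<beta>2(4) show ?thesis by (rule heap_eq_low_stable)
  qed
  with \<beta>1(2) \<beta>2 c2' assms(3) show ?case by (auto simp: lupd_def intro: map_le_trans)
qed

lemma eval_noninterferent: "eval \<theta> pc c c' \<Longrightarrow> noninterferent A \<theta> pc c c'"
proof (induction rule: eval.induct)
  case (EVar i \<theta> pc \<Sigma> \<mu>)
  then show ?case
    by (intro noninterferent_stateless)
      (auto elim!: VarE intro!: veq_vjoin simp: env_eq_def list_all2_conv_all_nth)
next
  case EUnit
  show ?case by (intro noninterferent_stateless) (auto elim: UnitE)
next
  case ELabel
  show ?case by (intro noninterferent_stateless) (auto elim: LblE)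
next
  case EFun
  show ?case by (intro noninterferent_stateless) (auto elim: LamE simp: env_eq_def)
next
  case EGetLabel
  show ?case by (intro noninterferent_stateless) (auto elim: GetLabelE)
next
  case ECmpT
  then show ?case using noninterferent_Cmp[OF ECmpT.IH] by simp
next
  case ECmpF
  then show ?case using noninterferent_Cmp[OF ECmpF.IH] by simp
qed (blast intro: noninterferent_App noninterferent_Inl noninterferent_Inr noninterferent_Case
       noninterferent_Pair noninterferent_Fst noninterferent_Snd noninterferent_LabelOf
       noninterferent_Taint noninterferent_NewI noninterferent_ReadI noninterferent_WriteI
       noninterferent_LabelOfRefI noninterferent_NewS noninterferent_ReadS
       noninterferent_LabelOfRefS noninterferent_WriteS)+

theorem mainTheorem3:
  fixes A pc :: "'l::semilattice_sup"
    and \<beta> :: "nat \<rightharpoonup> nat"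
    and c1 c2 :: "'l iconf" and \<theta>1 \<theta>2 :: "'l env"
    and c1' c2' :: "'l fconf"
  assumes "pbij \<beta>"
    and "valid_init c1 \<theta>1" and "valid_init c2 \<theta>2"
    and "iconf_eq A \<beta> c1 c2" and "env_eq A \<beta> \<theta>1 \<theta>2"
    and "eval \<theta>1 pc c1 c1'" and "eval \<theta>2 pc c2 c2'"
  shows "\<exists>\<beta>'. pbij \<beta>' \<and> \<beta> \<subseteq>\<^sub>m \<beta>' \<and> fconf_eq A \<beta>' c1' c2'"
  using eval_noninterferent[OF assms(6)] assms(1,4,5,7) unfolding noninterferent_def by blast

end
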